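(* Let $k\ge 1$ and $r\ge 2$ be integers and let $d_1\ge d_2\ge \cdots\ge d_k$ be positive integers. Then for all sufficiently large $n$, $$ex_r\Big(n,\bigcup_{i=1}^k S^+_{d_i}\Big)=\max_{1\le i\le k}\left\{\binom{n}{r}-\binom{n-i+1}{r}+ex_r\big(n-i+1,S^+_{d_i}\big)\right\}.$$
   Context: For a family (or single) $r$-uniform hypergraph $\mathcal F$, $ex_r(n,\mathcal F)$ denotes the maximum number of hyperedges in an $n$-vertex $r$-uniform hypergraph containing no member of $\mathcal F$ as a (not necessarily induced) subhypergraph. $S_\ell$ denotes the star $K_{1,\ell}$ with $\ell$ edges. For a graph $F$ and $r\ge 2$, the expansion $F^+$ is the $r$-uniform hypergraph obtained from $F$ by adding $r-2$ new vertices to each edge, all added vertices being distinct (so for $r=2$, $F^+=F$). $\bigcup_{i=1}^k S^+_{d_i}$ denotes the vertex-disjoint union of the hypergraphs $S^+_{d_1},\dots,S^+_{d_k}$. *)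

theory Defs
  imports Main
begin

definition uniform_hypergraphs :: "nat \<Rightarrow> nat \<Rightarrow> nat set set set" where
  "uniform_hypergraphs r n = {H. \<forall>e\<in>H. e \<subseteq> {0..<n} \<and> card e = r}"

definition contains_copy :: "'a set set \<Rightarrow> nat set set \<Rightarrow> bool" where
  "contains_copy F H \<longleftrightarrow> (\<exists>f. inj_on f (\<Union>F) \<and> (\<forall>e\<in>F. f ` e \<in> H))"

definition ex :: "nat \<Rightarrow> nat \<Rightarrow> 'a set set \<Rightarrow> nat" where
  "ex r n F = Max (card ` {H \<in> uniform_hypergraphs r n. \<not> contains_copy F H})"

text \<open>Expansion S_l^+ of the star K_{1,l} into an r-graph: centre 0, leaves 1..l,
  the j-th edge {0,j} receives the r-2 fresh vertices l+(j-1)(r-2)+1 .. l+j(r-2).\<close>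
definition star_plus :: "nat \<Rightarrow> nat \<Rightarrow> nat set set" where
  "star_plus r l = (\<lambda>j. {0, j} \<union> {l + (j - 1) * (r - 2) + 1 .. l + j * (r - 2)}) ` {1..l}"

text \<open>Vertex-disjoint union of S^+_{d 1}, ..., S^+_{d k}: the copy with index i uses
  vertices tagged (i, _).\<close>
definition star_forest_plus :: "nat \<Rightarrow> nat \<Rightarrow> (nat \<Rightarrow> nat) \<Rightarrow> (nat \<times> nat) set set" where
  "star_forest_plus r k d = (\<Union>i\<in>{1..k}. (\<lambda>e. Pair i ` e) ` star_plus r (d i))"

end

theory Submission
  imports Defs "HOL-Library.Disjoint_Sets"
begin

(* Lower bound: in the i-th construction (all r-sets meeting a set U of i - 1 vertices, plus an
   extremal S+_{d_i}-free graph on the remaining vertices) some of the first i stars of a copy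
   of the forest misses U, and it contains S+_{d_i}.

   Upper bound, by induction on k: let G be extremal. If G has no S+_{d_1}, the term i = 1
   bounds |G|. Otherwise delete a set W of vertices meeting at most C(n-1, r-1) edges such that
   G - W contains no copy of the forest of the other k - 1 stars: either one vertex of degree
   much larger than n^(r-2), at which a copy of S+_{d_1} avoiding any given copy of that forest
   can be grown greedily, or, if there is no such vertex, the vertex set of a copy of S+_{d_1}.
   By induction G - W obeys the bound for the smaller forest on n - |W| vertices, and adding
   C(n-1, r-1) to its i-th term gives at most the (i+1)-st term of the bound for G. *)

definition embedding :: "('a \<Rightarrow> 'b) \<Rightarrow> 'a set set \<Rightarrow> 'b set set \<Rightarrow> bool" where
  "embedding f F H \<longleftrightarrow> inj_on f (\<Union>F) \<and> (\<forall>e\<in>F. f ` e \<in> H)"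

lemma contains_copy_iff_embedding: "contains_copy F H \<longleftrightarrow> (\<exists>f. embedding f F H)"
  unfolding contains_copy_def embedding_def ..

lemma contains_copy_empty: "contains_copy {} H"
  unfolding contains_copy_def by simp

lemma embedding_image_Union_subset: "embedding f F H \<Longrightarrow> f ` \<Union>F \<subseteq> \<Union>H"
  unfolding embedding_def by blast

lemma embedding_comp:
  assumes "embedding g F F'" "embedding f F' H"
  shows "embedding (f \<circ> g) F H"
proof -
  have "inj_on f (g ` \<Union>F)"
    using assms embedding_image_Union_subset unfolding embedding_def by (metis inj_on_subset)
  moreover have "(f \<circ> g) ` e = f ` (g ` e)" for e
    by (simp add: image_comp)
  ultimately show ?thesis
    using assms unfolding embedding_def by (auto simp: comp_inj_on)
qed

lemma embedding_mono: "embedding f F H \<Longrightarrow> H \<subseteq> H' \<Longrightarrow> embedding f F H'"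
  unfolding embedding_def by blast

lemma embedding_relabel_guest:
  assumes "embedding f F H" "\<forall>x\<in>\<Union>F. \<psi> (\<phi> x) = x"
  shows "embedding (f \<circ> \<psi>) ((`) \<phi> ` F) H"
proof -
  have img: "(f \<circ> \<psi>) ` \<phi> ` e = f ` e" if "e \<in> F" for e
    using assms(2) that by (force simp: image_comp)
  have "inj_on ((f \<circ> \<psi>) \<circ> \<phi>) (\<Union>F)"
    using assms unfolding embedding_def inj_on_def by simp
  then have "inj_on (f \<circ> \<psi>) (\<phi> ` \<Union>F)"
    by (rule inj_on_imageI)
  then show ?thesis
    using assms(1) img unfolding embedding_def by (simp add: image_Union)
qed

lemma embedding_relabel_host:
  assumes "embedding f F ((`) \<phi> ` H)" "\<forall>x\<in>\<Union>H. \<psi> (\<phi> x) = x"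
  shows "embedding (\<psi> \<circ> f) F H"
proof -
  have img: "\<psi> ` \<phi> ` e = e" if "e \<in> H" for e
    using assms(2) that by (force simp: image_comp)
  have "inj_on (\<psi> \<circ> \<phi>) (\<Union>H)"
    using assms(2) unfolding inj_on_def by simp
  then have "inj_on \<psi> (\<phi> ` \<Union>H)"
    by (rule inj_on_imageI)
  moreover have "f ` \<Union>F \<subseteq> \<phi> ` \<Union>H"
    using embedding_image_Union_subset[OF assms(1)] by (simp add: image_Union)
  ultimately have "inj_on (\<psi> \<circ> f) (\<Union>F)"
    using assms(1) unfolding embedding_def by (simp add: comp_inj_on inj_on_subset)
  moreover have "(\<psi> \<circ> f) ` e \<in> H" if "e \<in> F" for e
  proof -
    have "f ` e \<in> (`) \<phi> ` H"
      using assms(1) that unfolding embedding_def by simp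
    then obtain e' where e': "e' \<in> H" "f ` e = \<phi> ` e'" by (rule imageE)
    have "(\<psi> \<circ> f) ` e = \<psi> ` (f ` e)" by (rule image_comp[symmetric])
    also have "\<dots> = e'" using e' img by simp
    finally show ?thesis using e'(1) by simp
  qed
  ultimately show ?thesis unfolding embedding_def by blast
qed

lemma embedding_Un:
  assumes "embedding f F H" "embedding g F' H"
    and "\<Union>F \<inter> \<Union>F' = {}" "f ` \<Union>F \<inter> g ` \<Union>F' = {}"
  shows "embedding (\<lambda>x. if x \<in> \<Union>F then f x else g x) (F \<union> F') H"
proof -
  let ?h = "\<lambda>x. if x \<in> \<Union>F then f x else g x"
  have "?h ` e = f ` e" if "e \<in> F" for e
    using that by (intro image_cong) auto
  moreover have "?h ` e = g ` e" if "e \<in> F'" for e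
    using that assms(3) by (intro image_cong) auto
  moreover have "inj_on ?h (\<Union>F \<union> \<Union>F')"
  proof (rule inj_onI)
    fix x y assume xy: "x \<in> \<Union>F \<union> \<Union>F'" "y \<in> \<Union>F \<union> \<Union>F'" and h: "?h x = ?h y"
    have "f x \<noteq> g y" "g y \<noteq> f x" if "x \<in> \<Union>F" "y \<in> \<Union>F'" for x y
      using assms(4) that by blast+
    then show "x = y"
      using xy h assms(1,2,3) unfolding embedding_def
      by (cases "x \<in> \<Union>F"; cases "y \<in> \<Union>F") (auto dest: inj_onD)
  qed
  ultimately show ?thesis
    using assms(1,2) unfolding embedding_def by auto
qed

definition uniform_on :: "nat \<Rightarrow> 'a set \<Rightarrow> 'a set set \<Rightarrow> bool" where
  "uniform_on r V G \<longleftrightarrow> (\<forall>e\<in>G. e \<subseteq> V \<and> card e = r)"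

lemma uniform_hypergraphs_iff: "H \<in> uniform_hypergraphs r n \<longleftrightarrow> uniform_on r {0..<n} H"
  unfolding uniform_hypergraphs_def uniform_on_def by simp

lemma uniform_on_finite: "uniform_on r V G \<Longrightarrow> finite V \<Longrightarrow> finite G"
  unfolding uniform_on_def by (meson Pow_iff finite_Pow_iff finite_subset subsetI)

lemma card_le_ex:
  assumes "uniform_on r {0..<n} H" "\<not> contains_copy F H"
  shows "card H \<le> ex r n F"
proof -
  have "finite {H \<in> uniform_hypergraphs r n. \<not> contains_copy F H}"
    by (rule finite_subset[of _ "Pow (Pow {0..<n})"]) (auto simp: uniform_hypergraphs_def)
  then show ?thesis
    unfolding ex_def using assms by (intro Max_ge) (auto simp: uniform_hypergraphs_iff)
qed

lemma ex_attained:
  assumes "F \<noteq> {}"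
  obtains H where "uniform_on r {0..<n} H" "\<not> contains_copy F H" "card H = ex r n F"
proof -
  let ?S = "{H \<in> uniform_hypergraphs r n. \<not> contains_copy F H}"
  have "finite ?S"
    by (rule finite_subset[of _ "Pow (Pow {0..<n})"]) (auto simp: uniform_hypergraphs_def)
  moreover have "{} \<in> ?S"
    using assms unfolding uniform_hypergraphs_def contains_copy_def by auto
  ultimately have "ex r n F \<in> card ` ?S"
    unfolding ex_def by (intro Max_in) auto
  then show ?thesis using that by (auto simp: uniform_hypergraphs_iff)
qed

lemma ex_mono:
  assumes "a \<le> b" "F \<noteq> {}"
  shows "ex r a F \<le> ex r b F"
proof -
  obtain H where H: "uniform_on r {0..<a} H" "\<not> contains_copy F H" "card H = ex r a F"
    using ex_attained[OF assms(2)] by blast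
  have "uniform_on r {0..<b} H"
    using H(1) assms(1) unfolding uniform_on_def by fastforce
  then show ?thesis using card_le_ex H by metis
qed

lemma card_le_ex_card:
  assumes "finite V" "uniform_on r V G" "\<not> contains_copy F G"
  shows "card G \<le> ex r (card V) F"
proof -
  obtain \<phi> where \<phi>: "bij_betw \<phi> V {0..<card V}"
    using assms(1) ex_bij_betw_finite_nat by blast
  then have inj\<phi>: "inj_on \<phi> V" by (rule bij_betw_imp_inj_on)
  have sub: "\<Union>G \<subseteq> V" "G \<subseteq> Pow V"
    using assms(2) unfolding uniform_on_def by auto
  have \<psi>\<phi>: "\<forall>x\<in>\<Union>G. the_inv_into V \<phi> (\<phi> x) = x"
    using sub(1) the_inv_into_f_f[OF inj\<phi>] by blast
  have inj: "inj_on ((`) \<phi>) G"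
    using inj_on_subset[OF inj_on_image_Pow[OF inj\<phi>] sub(2)] .
  have "uniform_on r {0..<card V} ((`) \<phi> ` G)"
    using assms(2) \<phi> unfolding uniform_on_def bij_betw_def
    by (auto simp: card_image inj_on_subset)
  moreover have "\<not> contains_copy F ((`) \<phi> ` G)"
    using assms(3) embedding_relabel_host[where \<psi> = "the_inv_into V \<phi>", OF _ \<psi>\<phi>]
    unfolding contains_copy_iff_embedding by blast
  ultimately have "card ((`) \<phi> ` G) \<le> ex r (card V) F"
    by (rule card_le_ex)
  then show ?thesis
    using card_image[OF inj] by simp
qed

definition degree :: "'a set set \<Rightarrow> 'a \<Rightarrow> nat" where
  "degree G v = card {e\<in>G. v \<in> e}"

lemma card_supersets_le:
  assumes "finite V" "S \<subseteq> V"
  shows "card {e. e \<subseteq> V \<and> card e = r \<and> S \<subseteq> e} \<le> (card V - card S) choose (r - card S)"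
proof -
  have fS: "finite S" using assms finite_subset by blast
  let ?A = "{e. e \<subseteq> V \<and> card e = r \<and> S \<subseteq> e}"
  let ?B = "{B. B \<subseteq> V - S \<and> card B = r - card S}"
  have "inj_on (\<lambda>e. e - S) ?A" by (rule inj_onI) blast
  moreover have "(\<lambda>e. e - S) ` ?A \<subseteq> ?B"
    using fS by (auto simp: card_Diff_subset)
  moreover have "finite ?B" using assms(1) by simp
  ultimately have "card ?A \<le> card ?B" by (rule card_inj_on_le)
  also have "card ?B = (card V - card S) choose (r - card S)"
    using assms fS by (simp add: n_subsets card_Diff_subset)
  finally show ?thesis .
qed

lemma card_edges_containing_le:
  assumes "finite V" "uniform_on r V G" "S \<subseteq> V"
  shows "card {e\<in>G. S \<subseteq> e} \<le> (card V - card S) choose (r - card S)"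
proof -
  have "{e\<in>G. S \<subseteq> e} \<subseteq> {e. e \<subseteq> V \<and> card e = r \<and> S \<subseteq> e}"
    using assms(2) unfolding uniform_on_def by auto
  then have "card {e\<in>G. S \<subseteq> e} \<le> card {e. e \<subseteq> V \<and> card e = r \<and> S \<subseteq> e}"
    using assms(1) by (intro card_mono) auto
  also have "\<dots> \<le> (card V - card S) choose (r - card S)"
    using assms(1,3) by (rule card_supersets_le)
  finally show ?thesis .
qed

lemma degree_le:
  assumes "finite V" "uniform_on r V G"
  shows "degree G v \<le> (card V - 1) choose (r - 1)"
proof (cases "v \<in> V")
  case True
  then show ?thesis
    using card_edges_containing_le[OF assms, of "{v}"] unfolding degree_def by simp
next
  case False
  then have "{e\<in>G. v \<in> e} = {}" using assms(2) unfolding uniform_on_def by auto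
  then show ?thesis unfolding degree_def by (simp only: card.empty zero_le)
qed

lemma codegree_le:
  assumes "finite V" "uniform_on r V G" "u \<noteq> v"
  shows "card {e\<in>G. u \<in> e \<and> v \<in> e} \<le> (card V - 2) choose (r - 2)"
proof (cases "u \<in> V \<and> v \<in> V")
  case True
  then show ?thesis
    using card_edges_containing_le[OF assms(1,2), of "{u, v}"] assms(3) by (simp add: numeral_2_eq_2)
next
  case False
  then have "{e\<in>G. u \<in> e \<and> v \<in> e} = {}" using assms(2) unfolding uniform_on_def by auto
  then show ?thesis by (simp only: card.empty zero_le)
qed

lemma card_edges_meeting_le:
  assumes "finite W"
  shows "card {e\<in>G. e \<inter> W \<noteq> {}} \<le> (\<Sum>u\<in>W. degree G u)"
proof -
  have "{e\<in>G. e \<inter> W \<noteq> {}} = (\<Union>u\<in>W. {e\<in>G. u \<in> e})" by blast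
  then show ?thesis unfolding degree_def using card_UN_le[OF assms] by simp
qed

lemma exists_edge_avoiding:
  assumes "finite V" "uniform_on r V G" "finite Z" "v \<notin> Z"
    and "card Z * ((card V - 2) choose (r - 2)) < degree G v"
  shows "\<exists>e\<in>G. v \<in> e \<and> e \<inter> Z = {}"
proof (rule ccontr)
  assume "\<not> ?thesis"
  then have "{e\<in>G. v \<in> e} \<subseteq> (\<Union>u\<in>Z. {e\<in>G. u \<in> e \<and> v \<in> e})" by blast
  then have "degree G v \<le> card (\<Union>u\<in>Z. {e\<in>G. u \<in> e \<and> v \<in> e})"
    unfolding degree_def using uniform_on_finite[OF assms(2,1)] assms(3)
    by (intro card_mono) auto
  also have "\<dots> \<le> (\<Sum>u\<in>Z. card {e\<in>G. u \<in> e \<and> v \<in> e})"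
    using assms(3) by (rule card_UN_le)
  also have "\<dots> \<le> (\<Sum>u\<in>Z. (card V - 2) choose (r - 2))"
    by (rule sum_mono, rule codegree_le[OF assms(1,2)]) (use assms(4) in auto)
  finally show False using assms(5) by simp
qed

section \<open>Sunflowers and the expanded star\<close>

lemma greedy_sunflower:
  assumes "finite V" "uniform_on r V G" "finite X" "v \<notin> X"
    and "(card X + l * (r - 1)) * ((card V - 2) choose (r - 2)) < degree G v"
  shows "\<exists>E. (\<forall>t\<in>{1..l}. E t \<in> G \<and> v \<in> E t \<and> E t \<inter> X = {}) \<and>
             disjoint_family_on (\<lambda>t. E t - {v}) {1..l}"
  using assms(5)
proof (induction l)
  case 0
  then show ?case by (simp add: disjoint_family_on_def)
next
  case (Suc l)
  let ?C = "(card V - 2) choose (r - 2)"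
  have mono: "(card X + l * (r - 1)) * ?C \<le> (card X + Suc l * (r - 1)) * ?C"
    by (intro mult_right_mono) auto
  then obtain E where E: "\<forall>t\<in>{1..l}. E t \<in> G \<and> v \<in> E t \<and> E t \<inter> X = {}"
    and disj: "disjoint_family_on (\<lambda>t. E t - {v}) {1..l}"
    using Suc by (meson le_less_trans)
  define Z where "Z = X \<union> (\<Union>t\<in>{1..l}. E t - {v})"
  have "card (E t - {v}) = r - 1" if "t \<in> {1..l}" for t
    using E assms(2) that unfolding uniform_on_def by (simp add: card_Diff_singleton)
  then have "card (\<Union>t\<in>{1..l}. E t - {v}) \<le> l * (r - 1)"
    using card_UN_le[of "{1..l}" "\<lambda>t. E t - {v}"] by simp
  then have "card Z \<le> card X + l * (r - 1)"
    unfolding Z_def using card_Un_le[of X "\<Union>t\<in>{1..l}. E t - {v}"] by linarith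
  then have "card Z * ?C < degree G v"
    using Suc.prems mono by (meson le_less_trans mult_right_mono zero_le)
  moreover have "finite Z" "v \<notin> Z"
    using assms(1-4) E uniform_on_finite unfolding Z_def uniform_on_def by (auto intro: finite_subset)
  ultimately obtain e where e: "e \<in> G" "v \<in> e" "e \<inter> Z = {}"
    using exists_edge_avoiding[OF assms(1,2)] by blast
  let ?E = "E(Suc l := e)"
  have "(?E (Suc l) - {v}) \<inter> (\<Union>t\<in>{1..l}. ?E t - {v}) = {}"
    using e(3) unfolding Z_def by auto
  moreover have "disjoint_family_on (\<lambda>t. ?E t - {v}) {1..l}"
    using disj unfolding disjoint_family_on_def by simp
  moreover have "{1..Suc l} = insert (Suc l) {1..l}" by auto
  ultimately have "disjoint_family_on (\<lambda>t. ?E t - {v}) {1..Suc l}"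
    by (simp add: disjoint_family_on_insert)
  moreover have "\<forall>t\<in>{1..Suc l}. ?E t \<in> G \<and> v \<in> ?E t \<and> ?E t \<inter> X = {}"
    using E e unfolding Z_def by (auto simp: le_Suc_eq)
  ultimately show ?case by blast
qed

text \<open>Leaf \<open>t\<close> of \<open>S\<^sup>+\<^sub>l\<close> together with the \<open>r - 2\<close> vertices added to its edge.\<close>

definition petal :: "nat \<Rightarrow> nat \<Rightarrow> nat \<Rightarrow> nat set" where
  "petal r l t = insert t {l + (t - 1) * (r - 2) + 1 .. l + t * (r - 2)}"

lemma star_plus_petal: "star_plus r l = (\<lambda>t. insert 0 (petal r l t)) ` {1..l}"
  unfolding star_plus_def petal_def by auto

lemma zero_notin_petal: "1 \<le> t \<Longrightarrow> 0 \<notin> petal r l t"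
  unfolding petal_def by auto

lemma card_petal:
  assumes "r \<ge> 2" "1 \<le> t" "t \<le> l"
  shows "card (petal r l t) = r - 1"
proof -
  have "t * (r - 2) = (t - 1) * (r - 2) + (r - 2)"
    using assms(2) by (metis Suc_diff_le diff_Suc_1 mult_Suc add.commute)
  then have "card {l + (t - 1) * (r - 2) + 1 .. l + t * (r - 2)} = r - 2" by simp
  moreover have "t \<notin> {l + (t - 1) * (r - 2) + 1 .. l + t * (r - 2)}" using assms by auto
  ultimately show ?thesis using assms(1) unfolding petal_def by simp
qed

lemma petal_subset:
  assumes "r \<ge> 2" "1 \<le> t" "t \<le> l"
  shows "petal r l t \<subseteq> {1..l * (r - 1)}"
proof -
  have "l + t * (r - 2) \<le> l * (r - 1)"
  proof -
    have "l + t * (r - 2) \<le> l + l * (r - 2)" using assms by simp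
    also have "\<dots> = l * Suc (r - 2)" by simp
    also have "Suc (r - 2) = r - 1" using assms(1) by simp
    finally show ?thesis .
  qed
  moreover have "t \<le> l * (r - 1)"
    using assms mult_le_mono[of t l 1 "r - 1"] by simp
  ultimately show ?thesis unfolding petal_def using assms by auto
qed

lemma disjoint_family_petal: "disjoint_family_on (petal r l) {1..l}"
proof -
  have "petal r l s \<inter> petal r l t = {}" if "1 \<le> s" "s < t" "t \<le> l" for s t
  proof -
    have le: "s * (r - 2) \<le> (t - 1) * (r - 2)" using that by (intro mult_right_mono) auto
    have "\<forall>x\<in>petal r l s. x \<le> l + s * (r - 2) \<and> x \<noteq> t"
      using that unfolding petal_def by auto
    moreover have "l + s * (r - 2) < x" if "x \<in> petal r l t" "x \<noteq> t" for x
    proof -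
      have "l + (t - 1) * (r - 2) + 1 \<le> x" using that unfolding petal_def by auto
      then show ?thesis using le by linarith
    qed
    ultimately show ?thesis by fastforce
  qed
  then show ?thesis
    unfolding disjoint_family_on_def by (metis Int_commute atLeastAtMost_iff nat_neq_iff)
qed

lemma Union_star_plus:
  "\<Union>(star_plus r l) = (if l = 0 then {} else insert 0 (\<Union>t\<in>{1..l}. petal r l t))"
  unfolding star_plus_petal by auto

lemma finite_Union_star_plus: "finite (\<Union>(star_plus r l))"
  unfolding star_plus_def by auto

lemma Union_star_plus_subset:
  assumes "r \<ge> 2"
  shows "\<Union>(star_plus r l) \<subseteq> {0..l * (r - 1)}"
proof
  fix x assume "x \<in> \<Union>(star_plus r l)"
  then have "x = 0 \<or> (\<exists>t\<in>{1..l}. x \<in> petal r l t)"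
    unfolding Union_star_plus by (auto split: if_splits)
  then show "x \<in> {0..l * (r - 1)}"
    using petal_subset[OF assms] by (metis atLeastAtMost_iff subsetD zero_le)
qed

lemma card_Union_star_plus_le:
  assumes "r \<ge> 2"
  shows "card (\<Union>(star_plus r l)) \<le> l * (r - 1) + 1"
  using card_mono[OF _ Union_star_plus_subset[OF assms]] by simp

lemma Union_star_plus_nonempty: "0 < l \<Longrightarrow> \<Union>(star_plus r l) \<noteq> {}"
  unfolding Union_star_plus by simp

lemma star_plus_nonempty: "0 < l \<Longrightarrow> star_plus r l \<noteq> {}"
  unfolding star_plus_def by simp

text \<open>\<open>S\<^sup>+\<^sub>l\<close> sits inside \<open>S\<^sup>+\<^sub>l\<^sub>'\<close> by shifting the added vertices up by \<open>l' - l\<close>.\<close>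

lemma contains_copy_star_plus_mono:
  assumes "l \<le> l'" "contains_copy (star_plus r l') H"
  shows "contains_copy (star_plus r l) H"
proof -
  define g where "g x = (if x \<le> l then x else x + (l' - l))" for x
  have "inj g" unfolding g_def by (rule injI) (auto split: if_splits)
  moreover have "g ` e \<in> star_plus r l'" if e: "e \<in> star_plus r l" for e
  proof -
    obtain t where t: "t \<in> {1..l}" "e = {0, t} \<union> {l + (t - 1) * (r - 2) + 1 .. l + t * (r - 2)}"
      using e unfolding star_plus_def by blast
    have "g ` {l + (t - 1) * (r - 2) + 1 .. l + t * (r - 2)} = (\<lambda>x. x + (l' - l)) ` {l + (t - 1) * (r - 2) + 1 .. l + t * (r - 2)}"
      unfolding g_def by (intro image_cong) auto
    also have "\<dots> = {l + (t - 1) * (r - 2) + 1 + (l' - l) .. l + t * (r - 2) + (l' - l)}"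
      by (rule image_add_atLeastAtMost')
    also have "\<dots> = {l' + (t - 1) * (r - 2) + 1 .. l' + t * (r - 2)}"
      using assms(1) by simp
    finally have gI: "g ` {l + (t - 1) * (r - 2) + 1 .. l + t * (r - 2)} =
        {l' + (t - 1) * (r - 2) + 1 .. l' + t * (r - 2)}" .
    have "g ` {0, t} = {0, t}" using t unfolding g_def by auto
    then have "g ` e = {0, t} \<union> {l' + (t - 1) * (r - 2) + 1 .. l' + t * (r - 2)}"
      unfolding t(2) image_Un gI by simp
    then show ?thesis using t assms(1) unfolding star_plus_def by auto
  qed
  ultimately have "embedding g (star_plus r l) (star_plus r l')"
    unfolding embedding_def by (auto intro: inj_on_subset)
  then show ?thesis using assms(2) embedding_comp unfolding contains_copy_iff_embedding by blast
qed

lemma ex_bij_betw_disjoint_family: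
  assumes "disjoint_family_on A I" "\<forall>t\<in>I. \<exists>\<beta>. bij_betw \<beta> (A t) (B t)"
  shows "\<exists>\<beta>. \<forall>t\<in>I. bij_betw \<beta> (A t) (B t)"
proof -
  obtain \<beta> where \<beta>: "\<forall>t\<in>I. bij_betw (\<beta> t) (A t) (B t)" using assms(2) by metis
  define \<tau> where "\<tau> x = (THE t. t \<in> I \<and> x \<in> A t)" for x
  have "\<tau> x = t" if "t \<in> I" "x \<in> A t" for x t
    unfolding \<tau>_def using assms(1) that
    by (intro the_equality) (auto simp: disjoint_family_on_def)
  then have "bij_betw (\<lambda>x. \<beta> (\<tau> x) x) (A t) (B t)" if "t \<in> I" for t
    using \<beta> that by (auto intro: bij_betw_cong[THEN iffD1])
  then show ?thesis by blast
qed

lemma embedding_star_plus_sunflower: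
  assumes "r \<ge> 2" "\<forall>t\<in>{1..l}. E t \<in> G \<and> v \<in> E t \<and> card (E t) = r"
    and "disjoint_family_on (\<lambda>t. E t - {v}) {1..l}"
  shows "\<exists>h. embedding h (star_plus r l) G \<and> h ` \<Union>(star_plus r l) = (\<Union>t\<in>{1..l}. E t)"
proof -
  have "\<forall>t\<in>{1..l}. \<exists>\<beta>. bij_betw \<beta> (petal r l t) (E t - {v})"
  proof
    fix t assume t: "t \<in> {1..l}"
    then have "card (E t) = r" "v \<in> E t" using assms(2) by auto
    moreover have "finite (E t)"
      using \<open>card (E t) = r\<close> assms(1) by (intro card_ge_0_finite) simp
    ultimately have "finite (E t)" "card (E t - {v}) = r - 1" by auto
    then show "\<exists>\<beta>. bij_betw \<beta> (petal r l t) (E t - {v})"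
      using card_petal[OF assms(1)] t by (intro finite_same_card_bij) (auto simp: petal_def)
  qed
  from ex_bij_betw_disjoint_family[OF disjoint_family_petal this]
  obtain \<beta> where \<beta>: "\<forall>t\<in>{1..l}. bij_betw \<beta> (petal r l t) (E t - {v})" by blast
  define P where "P = (\<Union>t\<in>{1..l}. petal r l t)"
  define h where "h = \<beta>(0 := v)"
  have "bij_betw \<beta> P (\<Union>t\<in>{1..l}. E t - {v})"
    unfolding P_def using assms(3) \<beta> by (intro bij_betw_UNION_disjoint) auto
  then have "inj_on \<beta> P" "v \<notin> \<beta> ` P" unfolding bij_betw_def by auto
  moreover have "0 \<notin> P" unfolding P_def using zero_notin_petal by auto
  ultimately have "inj_on h (insert 0 P)"
    unfolding h_def by (auto intro: inj_on_fun_updI)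
  then have inj: "inj_on h (\<Union>(star_plus r l))"
    unfolding Union_star_plus P_def by (auto intro: inj_on_subset)
  have img: "h ` insert 0 (petal r l t) = E t" if "t \<in> {1..l}" for t
  proof -
    have "h ` petal r l t = \<beta> ` petal r l t"
      unfolding h_def using zero_notin_petal that by (intro image_cong) auto
    also have "\<dots> = E t - {v}" using \<beta> that unfolding bij_betw_def by auto
    finally show ?thesis using assms(2) that unfolding h_def by auto
  qed
  have "\<forall>s\<in>star_plus r l. h ` s \<in> G"
    unfolding star_plus_petal using img assms(2) by auto
  moreover have "h ` \<Union>(star_plus r l) = (\<Union>t\<in>{1..l}. E t)"
    unfolding star_plus_petal image_UN using img by simp
  ultimately show ?thesis using inj unfolding embedding_def by blast
qed

lemma embedding_star_plus_avoiding:
  assumes "r \<ge> 2" "finite V" "uniform_on r V G" "finite X" "v \<notin> X"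
    and "(card X + l * (r - 1)) * ((card V - 2) choose (r - 2)) < degree G v"
  shows "\<exists>h. embedding h (star_plus r l) G \<and> h ` \<Union>(star_plus r l) \<inter> X = {}"
proof -
  obtain E where E: "\<forall>t\<in>{1..l}. E t \<in> G \<and> v \<in> E t \<and> E t \<inter> X = {}"
    and disj: "disjoint_family_on (\<lambda>t. E t - {v}) {1..l}"
    using greedy_sunflower[OF assms(2-6)] by blast
  have "\<forall>t\<in>{1..l}. E t \<in> G \<and> v \<in> E t \<and> card (E t) = r"
    using E assms(3) unfolding uniform_on_def by blast
  then obtain h where "embedding h (star_plus r l) G"
    and "h ` \<Union>(star_plus r l) = (\<Union>t\<in>{1..l}. E t)"
    using embedding_star_plus_sunflower[OF assms(1) _ disj] by blast
  then show ?thesis using E by blast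
qed

lemma Union_star_forest_plus:
  "\<Union>(star_forest_plus r k d) = (SIGMA i:{1..k}. \<Union>(star_plus r (d i)))"
  unfolding star_forest_plus_def by auto

lemma finite_Union_star_forest_plus: "finite (\<Union>(star_forest_plus r k d))"
  unfolding Union_star_forest_plus using finite_Union_star_plus by blast

lemma card_Union_star_forest_plus_le:
  assumes "r \<ge> 2" "\<forall>i\<in>{1..k}. d i \<le> D"
  shows "card (\<Union>(star_forest_plus r k d)) \<le> k * (D * (r - 1) + 1)"
proof -
  have "card (\<Union>(star_forest_plus r k d)) = (\<Sum>i\<in>{1..k}. card (\<Union>(star_plus r (d i))))"
    unfolding Union_star_forest_plus using finite_Union_star_plus by simp
  also have "\<dots> \<le> (\<Sum>i\<in>{1..k}. D * (r - 1) + 1)"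
    using assms card_Union_star_plus_le[OF assms(1)]
    by (intro sum_mono) (meson add_le_mono1 le_trans mult_le_mono1)
  finally show ?thesis by simp
qed

lemma star_forest_plus_Suc:
  "star_forest_plus r (Suc k) d =
     (`) (Pair 1) ` star_plus r (d 1) \<union> (`) (apfst Suc) ` star_forest_plus r k (d \<circ> Suc)"
proof -
  have "{1..Suc k} = insert 1 (Suc ` {1..k})" by (auto simp: image_iff)
  then have "star_forest_plus r (Suc k) d =
      (`) (Pair 1) ` star_plus r (d 1) \<union> (\<Union>i\<in>{1..k}. (`) (Pair (Suc i)) ` star_plus r (d (Suc i)))"
    unfolding star_forest_plus_def by (simp del: image_Suc_atLeastAtMost)
  also have "(\<Union>i\<in>{1..k}. (`) (Pair (Suc i)) ` star_plus r (d (Suc i))) =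
      (`) (apfst Suc) ` star_forest_plus r k (d \<circ> Suc)"
    unfolding star_forest_plus_def image_UN by (simp add: image_image)
  finally show ?thesis .
qed

lemma embedding_star_forest_plus_component:
  assumes "embedding f (star_forest_plus r k d) H" "j \<in> {1..k}"
  shows "embedding (f \<circ> Pair j) (star_plus r (d j)) H"
proof -
  have "embedding (Pair j) (star_plus r (d j)) (star_forest_plus r k d)"
    using assms(2) unfolding embedding_def star_forest_plus_def by (auto intro: inj_onI bexI[of _ j])
  then show ?thesis using assms(1) by (rule embedding_comp)
qed

lemma contains_star_forest_plus_Suc:
  assumes "embedding h (star_plus r (d 1)) G" "embedding g (star_forest_plus r k (d \<circ> Suc)) G"
    and "h ` \<Union>(star_plus r (d 1)) \<inter> g ` \<Union>(star_forest_plus r k (d \<circ> Suc)) = {}"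
  shows "contains_copy (star_forest_plus r (Suc k) d) G"
proof -
  let ?S = "(`) (Pair 1) ` star_plus r (d 1)"
  let ?F = "(`) (apfst Suc) ` star_forest_plus r k (d \<circ> Suc)"
  have "embedding (h \<circ> snd) ?S G"
    using assms(1) by (rule embedding_relabel_guest) simp
  moreover have "embedding (g \<circ> apfst (\<lambda>i. i - 1)) ?F G"
    using assms(2) by (rule embedding_relabel_guest) (simp add: apfst_def map_prod_def split_def)
  moreover have "\<Union>?S \<inter> \<Union>?F = {}"
  proof -
    have "\<forall>p\<in>\<Union>(star_forest_plus r k (d \<circ> Suc)). 1 \<le> fst p"
      unfolding Union_star_forest_plus by auto
    then show ?thesis by force
  qed
  moreover have "(h \<circ> snd) ` \<Union>?S \<inter> (g \<circ> apfst (\<lambda>i. i - 1)) ` \<Union>?F = {}"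
    using assms(3) by (simp add: image_UN image_image apfst_def map_prod_def split_def image_Union)
  ultimately show ?thesis
    unfolding star_forest_plus_Suc contains_copy_iff_embedding by (blast intro: embedding_Un)
qed

section \<open>The extremal constructions\<close>

text \<open>All \<open>r\<close>-sets meeting a fixed set of \<open>i - 1\<close> vertices, together with an extremal
  \<open>S\<^sup>+\<^sub>d\<^sub>i\<close>-free graph on the remaining \<open>n - i + 1\<close> vertices.\<close>

definition construction_size :: "nat \<Rightarrow> (nat \<Rightarrow> nat) \<Rightarrow> nat \<Rightarrow> nat \<Rightarrow> nat" where
  "construction_size r d n i =
     (n choose r) - ((n - i + 1) choose r) + ex r (n - i + 1) (star_plus r (d i))"

definition forest_bound :: "nat \<Rightarrow> nat \<Rightarrow> (nat \<Rightarrow> nat) \<Rightarrow> nat \<Rightarrow> nat" where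
  "forest_bound r k d n = Max (construction_size r d n ` {1..k})"

lemma construction_size_le_forest_bound:
  "i \<in> {1..k} \<Longrightarrow> construction_size r d n i \<le> forest_bound r k d n"
  unfolding forest_bound_def by (rule Max_ge) auto

lemma forest_bound_attained:
  assumes "1 \<le> k"
  shows "\<exists>i\<in>{1..k}. forest_bound r k d n = construction_size r d n i"
proof -
  have "forest_bound r k d n \<in> construction_size r d n ` {1..k}"
    unfolding forest_bound_def using assms by (intro Max_in) auto
  then show ?thesis by blast
qed

lemma binomial_diff_mono:
  assumes "a \<le> b"
  shows "(a choose r) - ((a - t) choose r) \<le> (b choose r) - ((b - t) choose r)"
  using assms
proof (induction b rule: dec_induct)
  case (step b)
  have "(b choose r) - ((b - t) choose r) \<le> (Suc b choose r) - ((Suc b - t) choose r)"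
  proof (cases "b < t")
    case True
    then show ?thesis
      using binomial_right_mono[of b "Suc b" r] by (cases r) (auto simp: Suc_diff_le)
  next
    case False
    then have "Suc b - t = Suc (b - t)" by auto
    moreover have "(b - t) choose r \<le> b choose r" "(b - t) choose (r - 1) \<le> b choose (r - 1)"
      by (auto intro: binomial_right_mono)
    ultimately show ?thesis by (cases r) auto
  qed
  then show ?case using step.IH by linarith
qed simp

lemma binomial_diff_Suc:
  assumes "1 \<le> i" "1 \<le> r"
  shows "(Suc m choose r) - ((Suc m - i) choose r) = (m choose (r - 1)) + ((m choose r) - ((Suc m - i) choose r))"
proof -
  have "(Suc m - i) choose r \<le> m choose r" using assms(1) by (intro binomial_right_mono) simp
  then show ?thesis using assms(2) by (cases r) auto
qed

lemma binomial_codegree_le_degree: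
  assumes "r \<ge> 2" "m \<ge> 2" "c * (r - 1) \<le> m - 1"
  shows "c * ((m - 2) choose (r - 2)) \<le> (m - 1) choose (r - 1)"
proof -
  have "(r - 1) * ((m - 1) choose (r - 1)) = (m - 1) * ((m - 2) choose (r - 2))"
    using times_binomial_minus1_eq[of "r - 1" "m - 1"] assms(1) by (simp add: numeral_2_eq_2)
  then have "(r - 1) * (c * ((m - 2) choose (r - 2))) \<le> (r - 1) * ((m - 1) choose (r - 1))"
    using mult_right_mono[OF assms(3), of "(m - 2) choose (r - 2)"] by (simp add: mult.left_commute mult.assoc)
  then show ?thesis using assms(1) by simp
qed

text \<open>Adding a vertex joined to everything turns the \<open>i\<close>-th construction for the forest
  without its largest star into the \<open>(i + 1)\<close>-st construction for the whole forest.\<close>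

lemma construction_size_Suc:
  assumes "r \<ge> 2" "1 \<le> i" "i \<le> m" "m < n" "0 < d (Suc i)"
  shows "((n - 1) choose (r - 1)) + construction_size r (d \<circ> Suc) m i \<le> construction_size r d n (Suc i)"
proof -
  obtain n' where n: "n = Suc n'" using assms(4) by (cases n) auto
  have "(m choose r) - ((m - (i - 1)) choose r) \<le> (n' choose r) - ((n' - (i - 1)) choose r)"
    using assms(4) n by (intro binomial_diff_mono) simp
  moreover have "(n choose r) - ((n - i) choose r) = (n' choose (r - 1)) + ((n' choose r) - ((n - i) choose r))"
    unfolding n using assms(1,2) by (intro binomial_diff_Suc) auto
  moreover have "ex r (m - (i - 1)) (star_plus r (d (Suc i))) \<le> ex r (n - i) (star_plus r (d (Suc i)))"
    using assms star_plus_nonempty by (intro ex_mono) auto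
  moreover have "m - i + 1 = m - (i - 1)" "n - Suc i + 1 = n - i" "n - i = n' - (i - 1)"
    using assms(2-4) n by auto
  ultimately show ?thesis unfolding construction_size_def n by simp
qed

lemma forest_bound_Suc:
  assumes "r \<ge> 2" "1 \<le> k" "k \<le> m" "m < n" "\<forall>i\<in>{1..k}. 0 < d (Suc i)"
  shows "((n - 1) choose (r - 1)) + forest_bound r k (d \<circ> Suc) m \<le> forest_bound r (Suc k) d n"
proof -
  obtain i where i: "i \<in> {1..k}" "forest_bound r k (d \<circ> Suc) m = construction_size r (d \<circ> Suc) m i"
    using forest_bound_attained[OF assms(2)] by blast
  have "((n - 1) choose (r - 1)) + forest_bound r k (d \<circ> Suc) m \<le> construction_size r d n (Suc i)"
    unfolding i(2) using assms i(1) by (intro construction_size_Suc) auto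
  also have "\<dots> \<le> forest_bound r (Suc k) d n"
    using i(1) by (intro construction_size_le_forest_bound) auto
  finally show ?thesis .
qed

section \<open>The upper bound\<close>

lemma star_forest_plus_0: "star_forest_plus r 0 d = {}"
  unfolding star_forest_plus_def by simp

lemma star_forest_plus_nonempty: "0 < d 1 \<Longrightarrow> star_forest_plus r (Suc k) d \<noteq> {}"
  unfolding star_forest_plus_Suc using star_plus_nonempty by blast

lemma card_le_forest_bound_Suc:
  assumes "r \<ge> 2" "\<forall>i\<in>{1..k}. 0 < d (Suc i)" "finite V" "uniform_on r V G" "W \<subseteq> V" "W \<noteq> {}"
    and meeting: "card {e\<in>G. e \<inter> W \<noteq> {}} \<le> (card V - 1) choose (r - 1)"
    and free: "\<not> contains_copy (star_forest_plus r k (d \<circ> Suc)) {e\<in>G. e \<inter> W = {}}"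
    and "k \<le> card V - card W"
    and IH: "ex r (card V - card W) (star_forest_plus r k (d \<circ> Suc))
               \<le> forest_bound r k (d \<circ> Suc) (card V - card W)"
  shows "card G \<le> forest_bound r (Suc k) d (card V)"
proof -
  have "k \<noteq> 0"
  proof
    assume "k = 0"
    then show False using free by (simp add: star_forest_plus_0 contains_copy_empty)
  qed
  have W: "finite W" "0 < card W"
    using assms(3,5,6) finite_subset by (auto simp: card_gt_0_iff)
  have "uniform_on r (V - W) {e\<in>G. e \<inter> W = {}}"
    using assms(4) unfolding uniform_on_def by auto
  then have "card {e\<in>G. e \<inter> W = {}} \<le> ex r (card (V - W)) (star_forest_plus r k (d \<circ> Suc))"
    using assms(3) free by (intro card_le_ex_card) auto
  also have "card (V - W) = card V - card W"
    using assms(5) W(1) by (simp add: card_Diff_subset)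
  finally have avoiding: "card {e\<in>G. e \<inter> W = {}} \<le> ex r (card V - card W) (star_forest_plus r k (d \<circ> Suc))" .
  have "{e\<in>G. e \<inter> W \<noteq> {}} \<union> {e\<in>G. e \<inter> W = {}} = G" by blast
  then have "card G \<le> card {e\<in>G. e \<inter> W \<noteq> {}} + card {e\<in>G. e \<inter> W = {}}"
    using card_Un_le[of "{e\<in>G. e \<inter> W \<noteq> {}}" "{e\<in>G. e \<inter> W = {}}"] by simp
  moreover have "card W \<le> card V" using assms(3,5) by (rule card_mono)
  then have "((card V - 1) choose (r - 1)) + forest_bound r k (d \<circ> Suc) (card V - card W)
              \<le> forest_bound r (Suc k) d (card V)"
    using assms(1,2,9) \<open>k \<noteq> 0\<close> W(2) by (intro forest_bound_Suc) auto
  ultimately show ?thesis using meeting IH avoiding by linarith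
qed

lemma star_forest_free_delete_vertex:
  assumes "r \<ge> 2" "finite V" "uniform_on r V G"
    and "(card (\<Union>(star_forest_plus r k (d \<circ> Suc))) + d 1 * (r - 1)) * ((card V - 2) choose (r - 2))
           < degree G v"
    and "\<not> contains_copy (star_forest_plus r (Suc k) d) G"
  shows "\<not> contains_copy (star_forest_plus r k (d \<circ> Suc)) {e\<in>G. e \<inter> {v} = {}}"
proof
  let ?F = "star_forest_plus r k (d \<circ> Suc)"
  assume "contains_copy ?F {e\<in>G. e \<inter> {v} = {}}"
  then obtain g where g: "embedding g ?F {e\<in>G. e \<inter> {v} = {}}"
    unfolding contains_copy_iff_embedding by blast
  define X where "X = g ` \<Union>?F"
  have "v \<notin> X" using embedding_image_Union_subset[OF g] unfolding X_def by blast
  moreover have "finite X" "card X \<le> card (\<Union>?F)"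
    unfolding X_def by (simp_all add: finite_Union_star_forest_plus card_image_le)
  then have "(card X + d 1 * (r - 1)) * ((card V - 2) choose (r - 2))
      \<le> (card (\<Union>?F) + d 1 * (r - 1)) * ((card V - 2) choose (r - 2))"
    by (intro mult_right_mono) auto
  then have "(card X + d 1 * (r - 1)) * ((card V - 2) choose (r - 2)) < degree G v"
    using assms(4) by linarith
  ultimately obtain h where h: "embedding h (star_plus r (d 1)) G" "h ` \<Union>(star_plus r (d 1)) \<inter> X = {}"
    using embedding_star_plus_avoiding[OF assms(1-3) \<open>finite X\<close>] by blast
  have "embedding g ?F G" using g by (rule embedding_mono) blast
  with h have "contains_copy (star_forest_plus r (Suc k) d) G"
    unfolding X_def by (intro contains_star_forest_plus_Suc)
  then show False using assms(5) by contradiction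
qed

lemma star_forest_free_delete_star:
  assumes "embedding h (star_plus r (d 1)) G" "\<not> contains_copy (star_forest_plus r (Suc k) d) G"
  shows "\<not> contains_copy (star_forest_plus r k (d \<circ> Suc)) {e\<in>G. e \<inter> h ` \<Union>(star_plus r (d 1)) = {}}"
proof
  let ?F = "star_forest_plus r k (d \<circ> Suc)"
  let ?W = "h ` \<Union>(star_plus r (d 1))"
  assume "contains_copy ?F {e\<in>G. e \<inter> ?W = {}}"
  then obtain g where g: "embedding g ?F {e\<in>G. e \<inter> ?W = {}}"
    unfolding contains_copy_iff_embedding by blast
  then have "?W \<inter> g ` \<Union>?F = {}" using embedding_image_Union_subset[OF g] by blast
  moreover have "embedding g ?F G" using g by (rule embedding_mono) blast
  ultimately have "contains_copy (star_forest_plus r (Suc k) d) G"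
    using assms(1) by (intro contains_star_forest_plus_Suc)
  then show False using assms(2) by contradiction
qed

lemma card_le_forest_bound_high_degree:
  assumes "r \<ge> 2" "\<forall>i\<in>{1..Suc k}. 0 < d i \<and> d i \<le> d 1"
    and "finite V" "uniform_on r V G" "\<not> contains_copy (star_forest_plus r (Suc k) d) G"
    and "Suc k * (d 1 * (r - 1) + 1) * ((card V - 2) choose (r - 2)) < degree G v"
    and IH: "\<forall>m\<ge>N. ex r m (star_forest_plus r k (d \<circ> Suc)) \<le> forest_bound r k (d \<circ> Suc) m"
    and "N + k < card V"
  shows "card G \<le> forest_bound r (Suc k) d (card V)"
proof -
  have "{e\<in>G. v \<in> e} \<noteq> {}"
    using assms(6) unfolding degree_def by (metis card.empty not_less_zero)
  then have "v \<in> V" using assms(4) unfolding uniform_on_def by blast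
  have "card (\<Union>(star_forest_plus r k (d \<circ> Suc))) \<le> k * (d 1 * (r - 1) + 1)"
    using assms(1,2) by (intro card_Union_star_forest_plus_le) auto
  then have "(card (\<Union>(star_forest_plus r k (d \<circ> Suc))) + d 1 * (r - 1)) * ((card V - 2) choose (r - 2))
      \<le> Suc k * (d 1 * (r - 1) + 1) * ((card V - 2) choose (r - 2))"
    by (intro mult_right_mono) auto
  then have "\<not> contains_copy (star_forest_plus r k (d \<circ> Suc)) {e\<in>G. e \<inter> {v} = {}}"
    using assms(6) by (intro star_forest_free_delete_vertex[OF assms(1,3,4) _ assms(5)]) linarith
  moreover have "card {e\<in>G. e \<inter> {v} \<noteq> {}} \<le> (card V - 1) choose (r - 1)"
    using degree_le[OF assms(3,4), of v] unfolding degree_def by simp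
  ultimately show ?thesis
    using assms(1,2,3,4,8) IH \<open>v \<in> V\<close> by (intro card_le_forest_bound_Suc[where W = "{v}"]) auto
qed

lemma card_le_forest_bound_low_degree:
  assumes "r \<ge> 2" "\<forall>i\<in>{1..Suc k}. 0 < d i"
    and "finite V" "uniform_on r V G" "\<not> contains_copy (star_forest_plus r (Suc k) d) G"
    and h: "embedding h (star_plus r (d 1)) G"
    and "\<forall>u\<in>V. degree G u \<le> \<Delta>" "(d 1 * (r - 1) + 1) * \<Delta> \<le> (card V - 1) choose (r - 1)"
    and IH: "\<forall>m\<ge>N. ex r m (star_forest_plus r k (d \<circ> Suc)) \<le> forest_bound r k (d \<circ> Suc) m"
    and "N + k + d 1 * (r - 1) + 1 \<le> card V"
  shows "card G \<le> forest_bound r (Suc k) d (card V)"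
proof -
  define W where "W = h ` \<Union>(star_plus r (d 1))"
  have "W \<subseteq> V" "W \<noteq> {}"
    using embedding_image_Union_subset[OF h] assms(2,4) Union_star_plus_nonempty
    unfolding W_def uniform_on_def by auto
  have card_W: "card W \<le> d 1 * (r - 1) + 1"
    unfolding W_def using card_image_le[OF finite_Union_star_plus] card_Union_star_plus_le[OF assms(1)]
    by (meson le_trans)
  have "card {e\<in>G. e \<inter> W \<noteq> {}} \<le> (\<Sum>u\<in>W. degree G u)"
    using \<open>W \<subseteq> V\<close> assms(3) finite_subset by (intro card_edges_meeting_le) auto
  also have "\<dots> \<le> card W * \<Delta>"
    using sum_bounded_above[of W "degree G" \<Delta>] assms(7) \<open>W \<subseteq> V\<close> by auto
  also have "\<dots> \<le> (card V - 1) choose (r - 1)"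
    using card_W assms(8) by (meson le_trans mult_le_mono1)
  finally have "card {e\<in>G. e \<inter> W \<noteq> {}} \<le> (card V - 1) choose (r - 1)" .
  moreover have "\<not> contains_copy (star_forest_plus r k (d \<circ> Suc)) {e\<in>G. e \<inter> W = {}}"
    unfolding W_def using h assms(5) by (rule star_forest_free_delete_star)
  ultimately show ?thesis
    using assms(1-4,10) IH \<open>W \<subseteq> V\<close> \<open>W \<noteq> {}\<close> card_W
    by (intro card_le_forest_bound_Suc[where W = W]) auto
qed

lemma card_le_forest_bound_no_star:
  assumes "uniform_on r {0..<n} G" "\<not> contains_copy (star_plus r (d 1)) G" "1 \<le> n"
  shows "card G \<le> forest_bound r (Suc k) d n"
proof -
  have "card G \<le> ex r n (star_plus r (d 1))"
    using assms(1,2) by (rule card_le_ex)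
  also have "\<dots> = construction_size r d n 1"
    using assms(3) unfolding construction_size_def by simp
  also have "\<dots> \<le> forest_bound r (Suc k) d n"
    by (rule construction_size_le_forest_bound) simp
  finally show ?thesis .
qed

text \<open>Here \<open>s\<close> bounds the number of vertices of \<open>S\<^sup>+\<^sub>d\<^sub>1\<close> and \<open>\<Delta>\<close> below is the degree threshold
  between the two deletion arguments. The bound on \<open>n\<close> leaves \<open>N + k\<close> vertices after deleting
  at most \<open>s\<close> of them, and it makes \<open>s * \<Delta> \<le> (n - 1 choose r - 1)\<close>.\<close>

lemma ex_star_forest_plus_Suc_le:
  fixes r k N n :: nat and d :: "nat \<Rightarrow> nat"
  defines "s \<equiv> d 1 * (r - 1) + 1"
  assumes "r \<ge> 2" "\<forall>i\<in>{1..Suc k}. 0 < d i \<and> d i \<le> d 1"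
    and IH: "\<forall>m\<ge>N. ex r m (star_forest_plus r k (d \<circ> Suc)) \<le> forest_bound r k (d \<circ> Suc) m"
    and n: "N + k + s + s * (Suc k * s) * (r - 1) + 2 \<le> n"
  shows "ex r n (star_forest_plus r (Suc k) d) \<le> forest_bound r (Suc k) d n"
proof -
  define \<Delta> where "\<Delta> = Suc k * s * ((n - 2) choose (r - 2))"
  have "star_forest_plus r (Suc k) d \<noteq> {}"
    using assms(3) by (intro star_forest_plus_nonempty) auto
  then obtain G where G: "uniform_on r {0..<n} G" "\<not> contains_copy (star_forest_plus r (Suc k) d) G"
    "card G = ex r n (star_forest_plus r (Suc k) d)"
    by (rule ex_attained)
  have "card G \<le> forest_bound r (Suc k) d n"
  proof (cases "contains_copy (star_plus r (d 1)) G")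
    case False
    then show ?thesis using G(1) n by (intro card_le_forest_bound_no_star) auto
  next
    case True
    then obtain h where h: "embedding h (star_plus r (d 1)) G"
      unfolding contains_copy_iff_embedding by blast
    show ?thesis
    proof (cases "\<exists>v. \<Delta> < degree G v")
      case True
      then obtain v where "\<Delta> < degree G v" by blast
      then have "card G \<le> forest_bound r (Suc k) d (card {0..<n})"
        using n by (intro card_le_forest_bound_high_degree[OF assms(2,3) _ G(1,2) _ IH])
          (simp_all add: s_def \<Delta>_def)
      then show ?thesis by simp
    next
      case False
      then have "\<forall>u\<in>{0..<n}. degree G u \<le> \<Delta>" by (simp add: not_less)
      moreover have "s * \<Delta> \<le> (n - 1) choose (r - 1)"
        unfolding \<Delta>_def using n assms(2)
        by (simp only: mult.assoc[symmetric]) (intro binomial_codegree_le_degree; simp)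
      moreover have "N + k + d 1 * (r - 1) + 1 \<le> card {0..<n}"
        using n unfolding s_def by simp
      ultimately have "card G \<le> forest_bound r (Suc k) d (card {0..<n})"
        using assms(3) unfolding s_def
        by (intro card_le_forest_bound_low_degree[OF assms(2) _ _ G(1,2) h _ _ IH]) auto
      then show ?thesis by simp
    qed
  qed
  then show ?thesis using G(3) by simp
qed

lemma ex_star_forest_plus_le:
  assumes "r \<ge> 2" "\<forall>i\<in>{1..k}. 0 < d i" "\<forall>i j. 1 \<le> i \<and> i \<le> j \<and> j \<le> k \<longrightarrow> d j \<le> d i"
  shows "\<exists>N. \<forall>n\<ge>N. ex r n (star_forest_plus r k d) \<le> forest_bound r k d n"
  using assms(2,3)
proof (induction k arbitrary: d)
  case 0
  \<comment> \<open>Both sides are \<open>Max {}\<close>; this case only feeds the step \<open>k = 0\<close>, whose hypothesis is vacuous.\<close>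
  show ?case by (simp add: star_forest_plus_0 contains_copy_empty ex_def forest_bound_def)
next
  case (Suc k)
  have "\<forall>i\<in>{1..k}. 0 < (d \<circ> Suc) i" "\<forall>i j. 1 \<le> i \<and> i \<le> j \<and> j \<le> k \<longrightarrow> (d \<circ> Suc) j \<le> (d \<circ> Suc) i"
    using Suc.prems by auto
  then obtain N where "\<forall>m\<ge>N. ex r m (star_forest_plus r k (d \<circ> Suc)) \<le> forest_bound r k (d \<circ> Suc) m"
    using Suc.IH by blast
  moreover have "\<forall>i\<in>{1..Suc k}. 0 < d i \<and> d i \<le> d 1"
    using Suc.prems by auto
  ultimately show ?case
    using ex_star_forest_plus_Suc_le[OF assms(1)] by blast
qed

section \<open>The lower bound\<close>

lemma card_sets_meeting_initial_segment:
  assumes "a \<le> n"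
  shows "card {e. e \<subseteq> {0..<n} \<and> card e = r \<and> e \<inter> {0..<a} \<noteq> {}} = (n choose r) - ((n - a) choose r)"
proof -
  have "{e. e \<subseteq> {0..<n} \<and> card e = r \<and> e \<inter> {0..<a} \<noteq> {}} =
      {e. e \<subseteq> {0..<n} \<and> card e = r} - {e. e \<subseteq> {a..<n} \<and> card e = r}"
    by (auto simp: disjoint_iff subset_iff not_le)
  moreover have "{e. e \<subseteq> {a..<n} \<and> card e = r} \<subseteq> {e. e \<subseteq> {0..<n} \<and> card e = r}" by auto
  ultimately show ?thesis
    using assms by (simp add: card_Diff_subset n_subsets)
qed

lemma card_image_shift: "card ((`) (\<lambda>x::nat. x + a) ` H) = card H"
  by (intro card_image inj_onI) (simp add: inj_image_eq_iff inj_def)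

lemma uniform_on_image_shift:
  assumes "uniform_on r {0..<m} H"
  shows "uniform_on r {a..<m + a} ((`) (\<lambda>x::nat. x + a) ` H)"
  using assms unfolding uniform_on_def by (fastforce simp: card_image inj_on_def)

lemma disjoint_family_on_avoid:
  assumes "finite X" "card X < card I" "disjoint_family_on P I"
  shows "\<exists>j\<in>I. P j \<inter> X = {}"
proof (rule ccontr)
  assume "\<not> ?thesis"
  then have "\<forall>j\<in>I. \<exists>x. x \<in> P j \<inter> X" by blast
  from bchoice[OF this] obtain p where p: "\<forall>j\<in>I. p j \<in> P j \<inter> X" by blast
  have "inj_on p I"
  proof (rule inj_onI, rule ccontr)
    fix j j' assume "j \<in> I" "j' \<in> I" "p j = p j'" "j \<noteq> j'"
    then have "p j \<in> P j \<inter> P j'" using p by auto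
    then show False
      using disjoint_family_onD[OF assms(3) \<open>j \<in> I\<close> \<open>j' \<in> I\<close> \<open>j \<noteq> j'\<close>] by blast
  qed
  then have "card I \<le> card X"
    using p assms(1) by (intro card_inj_on_le) auto
  then show False using assms(2) by simp
qed

lemma star_forest_plus_component_avoiding:
  assumes "embedding f (star_forest_plus r k d) H" "finite X" "card X < i" "i \<le> k"
  shows "\<exists>j\<in>{1..i}. f ` Pair j ` \<Union>(star_plus r (d j)) \<inter> X = {}"
proof -
  let ?U = "\<lambda>j. Pair j ` \<Union>(star_plus r (d j))"
  have U: "?U j \<subseteq> \<Union>(star_forest_plus r k d)" if "j \<in> {1..i}" for j
    using that assms(4) unfolding Union_star_forest_plus by auto
  have "disjoint_family_on (\<lambda>j. f ` ?U j) {1..i}"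
  proof (unfold disjoint_family_on_def, intro ballI impI)
    fix j j' assume "j \<in> {1..i}" "j' \<in> {1..i}" "j \<noteq> j'"
    moreover have "inj_on f (\<Union>(star_forest_plus r k d))"
      using assms(1) unfolding embedding_def by blast
    ultimately have "f ` ?U j \<inter> f ` ?U j' = f ` (?U j \<inter> ?U j')"
      using U by (simp add: inj_on_image_Int)
    then show "f ` ?U j \<inter> f ` ?U j' = {}" using \<open>j \<noteq> j'\<close> by auto
  qed
  moreover have "card X < card {1..i}" using assms(3) by simp
  ultimately show ?thesis
    using disjoint_family_on_avoid[OF assms(2)] by blast
qed

lemma star_forest_free_construction:
  assumes "i \<in> {1..k}" "\<forall>j\<in>{1..i}. d i \<le> d j"
    and A: "\<forall>e\<in>A. e \<inter> {0..<i - 1} \<noteq> {}" and H: "\<not> contains_copy (star_plus r (d i)) H"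
  shows "\<not> contains_copy (star_forest_plus r k d) (A \<union> (`) (\<lambda>x. x + (i - 1)) ` H)"
proof
  let ?H = "(`) (\<lambda>x. x + (i - 1)) ` H"
  assume "contains_copy (star_forest_plus r k d) (A \<union> ?H)"
  then obtain f where f: "embedding f (star_forest_plus r k d) (A \<union> ?H)"
    unfolding contains_copy_iff_embedding by blast
  obtain j where j: "j \<in> {1..i}" "f ` Pair j ` \<Union>(star_plus r (d j)) \<inter> {0..<i - 1} = {}"
    using star_forest_plus_component_avoiding[OF f, of "{0..<i - 1}" i] assms(1) by auto
  have "embedding (f \<circ> Pair j) (star_plus r (d j)) (A \<union> ?H)"
    using f j(1) assms(1) by (intro embedding_star_forest_plus_component) auto
  moreover have "(f \<circ> Pair j) ` e \<notin> A" if "e \<in> star_plus r (d j)" for e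
  proof -
    have "(f \<circ> Pair j) ` e \<inter> {0..<i - 1} = {}" using j(2) that by auto
    then show ?thesis using A by blast
  qed
  ultimately have "embedding (f \<circ> Pair j) (star_plus r (d j)) ?H"
    unfolding embedding_def by blast
  then have "embedding ((\<lambda>y. y - (i - 1)) \<circ> (f \<circ> Pair j)) (star_plus r (d j)) H"
    by (rule embedding_relabel_host) simp
  then have "contains_copy (star_plus r (d j)) H"
    unfolding contains_copy_iff_embedding by blast
  then show False
    using H assms(2) j(1) contains_copy_star_plus_mono by blast
qed

lemma construction_size_le_ex:
  assumes "i \<in> {1..k}" "k \<le> n" "0 < d i" "\<forall>j\<in>{1..i}. d i \<le> d j"
  shows "construction_size r d n i \<le> ex r n (star_forest_plus r k d)"
proof -
  define a where "a = i - 1"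
  have n: "n - i + 1 = n - a" "a \<le> n" using assms(1,2) unfolding a_def by auto
  obtain H where H: "uniform_on r {0..<n - a} H" "\<not> contains_copy (star_plus r (d i)) H"
    "card H = ex r (n - a) (star_plus r (d i))"
    by (rule ex_attained[OF star_plus_nonempty[OF assms(3)]])
  define A where "A = {e. e \<subseteq> {0..<n} \<and> card e = r \<and> e \<inter> {0..<a} \<noteq> {}}"
  define H' where "H' = (`) (\<lambda>x. x + a) ` H"
  have "uniform_on r {a..<n} H'"
    using uniform_on_image_shift[OF H(1), of a] n(2) unfolding H'_def by simp
  then have "e \<inter> {0..<a} = {}" if "e \<in> H'" for e
    using that unfolding uniform_on_def by fastforce
  then have "A \<inter> H' = {}" unfolding A_def by blast
  moreover have "uniform_on r {0..<n} (A \<union> H')"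
    using \<open>uniform_on r {a..<n} H'\<close> unfolding A_def uniform_on_def by fastforce
  moreover have "\<not> contains_copy (star_forest_plus r k d) (A \<union> H')"
    unfolding A_def H'_def a_def using assms(1,4) H(2) by (intro star_forest_free_construction) auto
  ultimately have "card (A \<union> H') \<le> ex r n (star_forest_plus r k d)"
    by (intro card_le_ex)
  moreover have "finite A" "finite H'"
    unfolding A_def H'_def using uniform_on_finite[OF H(1)] by auto
  then have "card (A \<union> H') = card A + card H'"
    using \<open>A \<inter> H' = {}\<close> by (rule card_Un_disjoint)
  moreover have "card A = (n choose r) - ((n - a) choose r)"
    unfolding A_def using n(2) by (rule card_sets_meeting_initial_segment)
  moreover have "card H' = ex r (n - a) (star_plus r (d i))"
    unfolding H'_def card_image_shift H(3) ..
  ultimately show ?thesis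
    unfolding construction_size_def n(1) by simp
qed

lemma forest_bound_le_ex:
  assumes "1 \<le> k" "k \<le> n" "\<forall>i\<in>{1..k}. 0 < d i" "\<forall>i j. 1 \<le> i \<and> i \<le> j \<and> j \<le> k \<longrightarrow> d j \<le> d i"
  shows "forest_bound r k d n \<le> ex r n (star_forest_plus r k d)"
proof -
  obtain i where "i \<in> {1..k}" "forest_bound r k d n = construction_size r d n i"
    using forest_bound_attained[OF assms(1)] by blast
  then show ?thesis
    using assms(2-4) construction_size_le_ex[of i k n d r] by auto
qed

theorem theorem1p5:
  fixes k r :: nat and d :: "nat \<Rightarrow> nat"
  assumes "k \<ge> 1" and "r \<ge> 2"
    and "\<forall>i\<in>{1..k}. d i > 0"
    and "\<forall>i j. 1 \<le> i \<and> i \<le> j \<and> j \<le> k \<longrightarrow> d j \<le> d i"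
  shows "\<exists>N. \<forall>n\<ge>N. ex r n (star_forest_plus r k d) =
           Max ((\<lambda>i. (n choose r) - ((n - i + 1) choose r) + ex r (n - i + 1) (star_plus r (d i))) ` {1..k})"
proof -
  obtain N where N: "\<forall>n\<ge>N. ex r n (star_forest_plus r k d) \<le> forest_bound r k d n"
    using ex_star_forest_plus_le[OF assms(2-4)] by blast
  have "ex r n (star_forest_plus r k d) = forest_bound r k d n" if "max N k \<le> n" for n
    using N forest_bound_le_ex[OF assms(1) _ assms(3,4), of n r] that by (simp add: order_antisym)
  then show ?thesis
    unfolding forest_bound_def construction_size_def[abs_def] by blast
qed

end
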